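(* Let $(X,d)$ be a complete metric space, let $E,F:(0,\infty)\to\mathbb{R}$ be a compatible pair of functions, and let $T:X\to X$ satisfy: for all $x,y\in X$ with $Tx\neq Ty$, $F(d(Tx,Ty))\le E(d(x,y))$. Then $T$ is a CJMP-contraction, and hence $T$ is a Picard operator.
   Context: $(E,F)$ is a compatible pair of functions if: $(C_1)$ for $t,s\in(0,\infty)$, $t\le s$ implies $E(t)<F(s)$; and $(C_2)$ for every $t>0$, every sequence $(t_n)_{n\in\mathbb{N}}\subset(t,\infty)$ with $t_n\to t$, and every sequence $(s_n)_{n\in\mathbb{N}}$ with $t<s_n<t_n$ for all $n$, one has $\limsup_{n\to\infty}(F(s_n)-E(t_n))>0$. A map $T:X\to X$ is contractive if $d(Tx,Ty)<d(x,y)$ for all $x\neq y$. $T$ is a CJMP-contraction if it is contractive and for every $\varepsilon>0$ there exists $\delta>0$ such that for all $x,y\in X$, $\varepsilon<d(x,y)<\varepsilon+\delta$ implies $d(Tx,Ty)\le\varepsilon$. $T$ is a Picard operator if $T$ has a unique fixed point $u\in X$ and for every $x\in X$ the sequence $(T^nx)_{n\in\mathbb{N}}$ converges to $u$. *)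

theory Defs
  imports "HOL-Analysis.Analysis"
begin

text \<open>Compatible pair (E,F) of functions defined on (0,\<infinity>); we use functions real \<Rightarrow> real
  whose values are only ever inspected on positive arguments.\<close>
definition compatible_pair :: "(real \<Rightarrow> real) \<Rightarrow> (real \<Rightarrow> real) \<Rightarrow> bool" where
  "compatible_pair E F \<longleftrightarrow>
     (\<forall>t s. 0 < t \<and> 0 < s \<and> t \<le> s \<longrightarrow> E t < F s) \<and>
     (\<forall>t > 0. \<forall>tn sn :: nat \<Rightarrow> real.
        (\<forall>n. t < tn n) \<and> tn \<longlonglongrightarrow> t \<and> (\<forall>n. t < sn n \<and> sn n < tn n) \<longrightarrow>
        limsup (\<lambda>n. ereal (F (sn n) - E (tn n))) > 0)"

definition contractive :: "('a::metric_space \<Rightarrow> 'a) \<Rightarrow> bool" where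
  "contractive T \<longleftrightarrow> (\<forall>x y. x \<noteq> y \<longrightarrow> dist (T x) (T y) < dist x y)"

definition cjmp_contraction :: "('a::metric_space \<Rightarrow> 'a) \<Rightarrow> bool" where
  "cjmp_contraction T \<longleftrightarrow> contractive T \<and>
     (\<forall>\<epsilon>>0. \<exists>\<delta>>0. \<forall>x y. \<epsilon> < dist x y \<and> dist x y < \<epsilon> + \<delta> \<longrightarrow> dist (T x) (T y) \<le> \<epsilon>)"

definition picard_operator :: "('a::metric_space \<Rightarrow> 'a) \<Rightarrow> bool" where
  "picard_operator T \<longleftrightarrow> (\<exists>u. T u = u \<and> (\<forall>v. T v = v \<longrightarrow> v = u) \<and>
     (\<forall>x. (\<lambda>n. (T ^^ n) x) \<longlonglongrightarrow> u))"

end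

theory Submission
  imports Defs
begin

(* If T x \<noteq> T y but d(Tx,Ty) \<ge> d(x,y), then (C1) gives E(d(x,y)) < F(d(Tx,Ty)), against the
   hypothesis; so T is contractive. If the CJMP condition failed at some \<epsilon>, there would be
   pairs with t_n = d(x_n,y_n) decreasing to \<epsilon> and \<epsilon> < s_n = d(Tx_n,Ty_n) < t_n; the hypothesis
   makes every F(s_n) - E(t_n) nonpositive, against (C2).
   A CJMP-contraction (a Meir-Keeler contraction) on a complete space is a Picard operator:
   the steps d(T^n x, T^(n+1) x) decrease to 0, and once a step is below min(\<delta>(\<epsilon>), \<epsilon>) the
   rest of the orbit stays within 2\<epsilon> of that point, so the orbit is Cauchy. *)

lemma compatible_pairD1:
  assumes "compatible_pair E F" and "0 < t" and "t \<le> s"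
  shows "E t < F s"
  using assms unfolding compatible_pair_def by auto

lemma compatible_pairD2:
  assumes "compatible_pair E F" and "0 < t" and "t' \<longlonglongrightarrow> t"
    and "\<And>n. t < s n" and "\<And>n. s n < t' n"
  shows "limsup (\<lambda>n. ereal (F (s n) - E (t' n))) > 0"
proof -
  have "\<forall>n. t < t' n \<and> t < s n \<and> s n < t' n"
    using assms(4,5) less_trans by blast
  with assms(1-3) show ?thesis
    unfolding compatible_pair_def by blast
qed

lemma contractive_if_compatible_pair:
  fixes T :: "'a::metric_space \<Rightarrow> 'a" and E F :: "real \<Rightarrow> real"
  assumes EF: "compatible_pair E F"
    and T: "\<And>x y. T x \<noteq> T y \<Longrightarrow> F (dist (T x) (T y)) \<le> E (dist x y)"
  shows "contractive T"
  unfolding contractive_def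
proof (intro allI impI)
  fix x y :: 'a
  assume "x \<noteq> y"
  show "dist (T x) (T y) < dist x y"
  proof (rule ccontr)
    assume "\<not> dist (T x) (T y) < dist x y"
    then have le: "dist x y \<le> dist (T x) (T y)"
      by simp
    have "0 < dist x y"
      using \<open>x \<noteq> y\<close> by simp
    with le have "T x \<noteq> T y"
      by auto
    moreover have "E (dist x y) < F (dist (T x) (T y))"
      using compatible_pairD1[OF EF \<open>0 < dist x y\<close> le] .
    ultimately show False
      using T by (meson not_le)
  qed
qed

lemma cjmp_contraction_if_compatible_pair:
  fixes T :: "'a::metric_space \<Rightarrow> 'a" and E F :: "real \<Rightarrow> real"
  assumes EF: "compatible_pair E F"
    and T: "\<And>x y. T x \<noteq> T y \<Longrightarrow> F (dist (T x) (T y)) \<le> E (dist x y)"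
  shows "cjmp_contraction T"
proof -
  have contr: "contractive T"
    using contractive_if_compatible_pair[OF EF T] .
  have "\<exists>\<delta>>0. \<forall>x y. \<epsilon> < dist x y \<and> dist x y < \<epsilon> + \<delta> \<longrightarrow> dist (T x) (T y) \<le> \<epsilon>"
    if "\<epsilon> > 0" for \<epsilon>
  proof (rule ccontr)
    assume "\<not> ?thesis"
    then have "\<exists>x y. \<epsilon> < dist x y \<and> dist x y < \<epsilon> + inverse (Suc n) \<and> \<epsilon> < dist (T x) (T y)"
      for n by (metis not_le inverse_positive_iff_positive of_nat_0_less_iff zero_less_Suc)
    then obtain x y where xy: "\<And>n. \<epsilon> < dist (x n) (y n)"
        "\<And>n. dist (x n) (y n) < \<epsilon> + inverse (Suc n)" "\<And>n. \<epsilon> < dist (T (x n)) (T (y n))"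
      by metis
    define t where "t n = dist (x n) (y n)" for n
    define s where "s n = dist (T (x n)) (T (y n))" for n
    have "t \<longlonglongrightarrow> \<epsilon>"
    proof (rule tendsto_sandwich[of "\<lambda>_. \<epsilon>" _ _ "\<lambda>n. \<epsilon> + inverse (Suc n)"])
      show "\<forall>\<^sub>F n in sequentially. \<epsilon> \<le> t n" "\<forall>\<^sub>F n in sequentially. t n \<le> \<epsilon> + inverse (Suc n)"
        using xy by (simp_all add: t_def less_imp_le)
    qed (simp_all only: LIMSEQ_inverse_real_of_nat_add tendsto_const)
    moreover have "\<epsilon> < s n" "s n < t n" for n
    proof -
      have "x n \<noteq> y n"
        using xy(1)[of n] \<open>\<epsilon> > 0\<close> by auto
      then show "\<epsilon> < s n" "s n < t n"
        using xy(3)[of n] contr by (simp_all add: s_def t_def contractive_def)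
    qed
    ultimately have "limsup (\<lambda>n. ereal (F (s n) - E (t n))) > 0"
      using compatible_pairD2[OF EF \<open>\<epsilon> > 0\<close>] by blast
    moreover have "limsup (\<lambda>n. ereal (F (s n) - E (t n))) \<le> 0"
    proof (rule Limsup_bounded, intro always_eventually allI)
      fix n
      have "T (x n) \<noteq> T (y n)"
        using xy(3)[of n] \<open>\<epsilon> > 0\<close> by auto
      then show "ereal (F (s n) - E (t n)) \<le> 0"
        using T by (simp add: s_def t_def)
    qed
    ultimately show False by simp
  qed
  with contr show ?thesis
    unfolding cjmp_contraction_def by blast
qed

lemma cjmp_contraction_imp_contractive:
  "cjmp_contraction T \<Longrightarrow> contractive T"
  by (simp add: cjmp_contraction_def)

lemma cjmp_contractionD:
  assumes "cjmp_contraction T" and "0 < \<epsilon>"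
  obtains \<delta> where "0 < \<delta>"
    and "\<And>x y. \<epsilon> < dist x y \<Longrightarrow> dist x y < \<epsilon> + \<delta> \<Longrightarrow> dist (T x) (T y) \<le> \<epsilon>"
  using assms unfolding cjmp_contraction_def by blast

lemma contractive_dist_le:
  assumes "contractive T"
  shows "dist (T x) (T y) \<le> dist x y"
  using assms by (cases "x = y") (auto simp: contractive_def less_imp_le)

lemma contractive_fixed_point_unique:
  assumes "contractive T" and "T u = u" and "T v = v"
  shows "u = v"
  using assms unfolding contractive_def by (metis order.irrefl)

lemma cjmp_contraction_iterate_step_tendsto_0:
  fixes T :: "'a::metric_space \<Rightarrow> 'a"
  assumes "cjmp_contraction T"
  shows "(\<lambda>n. dist ((T ^^ n) x) ((T ^^ Suc n) x)) \<longlonglongrightarrow> 0"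
proof -
  have contr: "contractive T"
    using cjmp_contraction_imp_contractive[OF assms] .
  define d where "d n = dist ((T ^^ n) x) ((T ^^ Suc n) x)" for n
  have "d (Suc n) \<le> d n" for n
    using contractive_dist_le[OF contr] by (simp add: d_def)
  then obtain L where "d \<longlonglongrightarrow> L" and L_le: "\<And>n. L \<le> d n"
    by (metis decseq_SucI decseq_convergent[where B = 0] zero_le_dist d_def)
  have "L \<ge> 0"
    using \<open>d \<longlonglongrightarrow> L\<close> by (rule LIMSEQ_le_const) (simp add: d_def)
  have d_ne_L: "d n \<noteq> L" if "L > 0" for n
  proof
    assume "d n = L"
    with \<open>L > 0\<close> have "(T ^^ n) x \<noteq> (T ^^ Suc n) x"
      by (auto simp: d_def)
    then have "d (Suc n) < d n"
      using contr by (simp add: d_def contractive_def)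
    with \<open>d n = L\<close> L_le[of "Suc n"] show False by simp
  qed
  have "L = 0"
  proof (rule ccontr)
    assume "L \<noteq> 0"
    with \<open>L \<ge> 0\<close> have "L > 0" by simp
    then obtain \<delta> where "\<delta> > 0"
      and \<delta>: "\<And>x y. L < dist x y \<Longrightarrow> dist x y < L + \<delta> \<Longrightarrow> dist (T x) (T y) \<le> L"
      using cjmp_contractionD[OF assms] by blast
    obtain N where "d N < L + \<delta>"
      using order_tendstoD(2)[OF \<open>d \<longlonglongrightarrow> L\<close>, of "L + \<delta>"] \<open>\<delta> > 0\<close>
      by (auto simp: eventually_sequentially)
    moreover have "L < d N"
      using L_le[of N] d_ne_L[OF \<open>L > 0\<close>, of N] by simp
    ultimately have "d (Suc N) \<le> L"
      using \<delta> by (simp add: d_def)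
    with L_le[of "Suc N"] d_ne_L[OF \<open>L > 0\<close>, of "Suc N"] show False by simp
  qed
  with \<open>d \<longlonglongrightarrow> L\<close> show ?thesis
    unfolding d_def[abs_def] by simp
qed

lemma dist_funpow_less_if_first_step_less:
  fixes T :: "'a::metric_space \<Rightarrow> 'a"
  assumes "contractive T"
    and \<delta>: "\<And>x y. \<epsilon> < dist x y \<Longrightarrow> dist x y < \<epsilon> + \<delta> \<Longrightarrow> dist (T x) (T y) \<le> \<epsilon>"
    and "0 < \<epsilon>" and "dist z (T z) < \<eta>" and "\<eta> \<le> \<delta>"
  shows "dist z ((T ^^ k) z) < \<epsilon> + \<eta>"
proof (induction k)
  case 0
  have "0 < \<eta>"
    using \<open>dist z (T z) < \<eta>\<close> zero_le_dist[of z "T z"] by linarith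
  with \<open>0 < \<epsilon>\<close> show ?case by simp
next
  case (Suc k)
  have "dist (T z) (T ((T ^^ k) z)) \<le> \<epsilon>"
  proof (cases "\<epsilon> < dist z ((T ^^ k) z)")
    case True
    with Suc.IH \<open>\<eta> \<le> \<delta>\<close> show ?thesis by (intro \<delta>) auto
  next
    case False
    then show ?thesis
      using contractive_dist_le[OF \<open>contractive T\<close>, of z "(T ^^ k) z"] by simp
  qed
  moreover have "dist z ((T ^^ Suc k) z) \<le> dist z (T z) + dist (T z) (T ((T ^^ k) z))"
    by (simp add: dist_triangle)
  ultimately show ?case
    using \<open>dist z (T z) < \<eta>\<close> by simp
qed

lemma cjmp_contraction_iterates_Cauchy:
  fixes T :: "'a::metric_space \<Rightarrow> 'a"
  assumes "cjmp_contraction T"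
  shows "Cauchy (\<lambda>n. (T ^^ n) x)"
proof (rule metric_CauchyI)
  fix e :: real
  assume "e > 0"
  define \<epsilon> where "\<epsilon> = e / 2"
  have "\<epsilon> > 0"
    using \<open>e > 0\<close> by (simp add: \<epsilon>_def)
  then obtain \<delta> where "\<delta> > 0"
    and \<delta>: "\<And>x y. \<epsilon> < dist x y \<Longrightarrow> dist x y < \<epsilon> + \<delta> \<Longrightarrow> dist (T x) (T y) \<le> \<epsilon>"
    using cjmp_contractionD[OF assms] by blast
  define \<eta> where "\<eta> = min \<delta> \<epsilon>"
  obtain N where N: "\<And>n. n \<ge> N \<Longrightarrow> dist ((T ^^ n) x) (T ((T ^^ n) x)) < \<eta>"
    using order_tendstoD(2)[OF cjmp_contraction_iterate_step_tendsto_0[OF assms, of x], of \<eta>]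
      \<open>\<delta> > 0\<close> \<open>\<epsilon> > 0\<close>
    by (auto simp: \<eta>_def eventually_sequentially)
  have close: "dist ((T ^^ m) x) ((T ^^ n) x) < e" if "N \<le> m" "m \<le> n" for m n
  proof -
    have "(T ^^ n) x = (T ^^ (n - m)) ((T ^^ m) x)"
      using \<open>m \<le> n\<close> funpow_add[of "n - m" m T] by simp
    then have "dist ((T ^^ m) x) ((T ^^ n) x) < \<epsilon> + \<eta>"
      using dist_funpow_less_if_first_step_less[OF cjmp_contraction_imp_contractive[OF assms]
          \<delta> \<open>\<epsilon> > 0\<close> N[OF \<open>N \<le> m\<close>]]
      by (simp add: \<eta>_def)
    then show ?thesis by (simp add: \<eta>_def \<epsilon>_def)
  qed
  show "\<exists>M. \<forall>m\<ge>M. \<forall>n\<ge>M. dist ((T ^^ m) x) ((T ^^ n) x) < e"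
    by (metis close dist_commute nle_le)
qed

theorem cjmp_contraction_imp_picard_operator:
  fixes T :: "'a::complete_space \<Rightarrow> 'a"
  assumes "cjmp_contraction T"
  shows "picard_operator T"
proof -
  have contr: "contractive T"
    using cjmp_contraction_imp_contractive[OF assms] .
  have "\<exists>u. T u = u \<and> (\<lambda>n. (T ^^ n) x) \<longlonglongrightarrow> u" for x
  proof -
    obtain u where u: "(\<lambda>n. (T ^^ n) x) \<longlonglongrightarrow> u"
      using cjmp_contraction_iterates_Cauchy[OF assms] Cauchy_convergent_iff convergent_def
      by blast
    have "(\<lambda>n. T ((T ^^ n) x)) \<longlonglongrightarrow> T u"
      by (rule metric_tendsto_imp_tendsto[OF u]) (simp add: contractive_dist_le[OF contr])
    moreover have "(\<lambda>n. T ((T ^^ n) x)) \<longlonglongrightarrow> u"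
      using LIMSEQ_Suc[OF u] by simp
    ultimately have "T u = u"
      by (rule LIMSEQ_unique)
    with u show ?thesis by blast
  qed
  then show ?thesis
    unfolding picard_operator_def
    by (metis contractive_fixed_point_unique[OF contr])
qed

theorem mainTheorem2:
  fixes T :: "'a::complete_space \<Rightarrow> 'a"
    and E F :: "real \<Rightarrow> real"
  assumes "compatible_pair E F"
    and "\<And>x y. T x \<noteq> T y \<Longrightarrow> F (dist (T x) (T y)) \<le> E (dist x y)"
  shows "cjmp_contraction T \<and> picard_operator T"
  using cjmp_contraction_if_compatible_pair[OF assms] cjmp_contraction_imp_picard_operator
  by blast

end
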